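(* Let $A=\mathbb{F}_q[t]$ and let $f_1,\ldots,f_r,g\in A$ be non-constant. The number of polynomial functions from $A/f_1A\times\cdots\times A/f_rA$ to $A/gA$ is $$N(f_1,\ldots,f_r;g)=\prod_{\mathbf{k}}q^{\deg\frac{g}{\gcd\left(g,\prod_{i=1}^r\prod_{j=0}^{k_i-1}(a_{k_i}-a_j)\right)}},$$ where the product is over all $\mathbf{k}=(k_1,\ldots,k_r)\in\mathbb{N}^r$ with $0\le k_i<\mu(f_i,g)$ for each $1\le i\le r$.
   Context: Write $\mathbb{F}_q=\{a_0=0,a_1,\ldots,a_{q-1}\}$. For $k\in\mathbb{N}$ with base-$q$ expansion $k=c_0+c_1q+\cdots+c_hq^h$ ($0\le c_s<q$), define $a_k=a_{c_0}+a_{c_1}t+\cdots+a_{c_h}t^h\in A$. Thus $\{a_0,\ldots,a_{q^d-1}\}$ is the set of polynomials of degree $<d$. For each $i$, $A/f_iA$ is identified with the complete residue system of polynomials of degree $<\deg f_i$. A function $f$ from $A/f_1A\times\cdots\times A/f_rA$ to $A/gA$ is a polynomial function if there is $F\in A[x_1,\ldots,x_r]$ with $F(b_1,\ldots,b_r)\equiv f(b_1,\ldots,b_r)\pmod g$ for all $(b_1,\ldots,b_r)$ with $\deg b_i<\deg f_i$ for each $i$. $\lambda(g)$ is the smallest positive integer $k$ such that $g\mid\prod_{j=0}^{k-1}(a_k-a_j)$, and $\mu(f_i,g)=\min(q^{\deg f_i},\lambda(g))$. *)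

theory Defs
  imports "HOL-Computational_Algebra.Computational_Algebra" "HOL-Library.FuncSet"
begin

text \<open>Enumeration of F_q: \<open>enum :: nat \<Rightarrow> 'a\<close> lists a_0 = 0, a_1, ..., a_{q-1}.
  The polynomial a_k has as coefficient of t^s the element enum(c_s), where c_s is the
  s-th base-q digit of k. Since k < q^(k+1), digits with index s > k vanish, and enum 0 = 0.\<close>
definition a_poly :: "(nat \<Rightarrow> 'a::{field,finite}) \<Rightarrow> nat \<Rightarrow> 'a poly" where
  "a_poly enum k = (\<Sum>s\<le>k. monom (enum ((k div card (UNIV :: 'a set) ^ s) mod card (UNIV :: 'a set))) s)"

definition lambda_fn :: "(nat \<Rightarrow> 'a::{field,finite}) \<Rightarrow> 'a poly \<Rightarrow> nat" where
  "lambda_fn enum g = (LEAST k. 0 < k \<and> g dvd (\<Prod>j<k. a_poly enum k - a_poly enum j))"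

definition mu_fn :: "(nat \<Rightarrow> 'a::{field,finite}) \<Rightarrow> 'a poly \<Rightarrow> 'a poly \<Rightarrow> nat" where
  "mu_fn enum f g = min (card (UNIV :: 'a set) ^ degree f) (lambda_fn enum g)"

definition dom_res :: "'a::field poly list \<Rightarrow> 'a poly list set" where
  "dom_res fs = {bs. length bs = length fs \<and> (\<forall>i<length fs. degree (bs ! i) < degree (fs ! i))}"

definition res_sys :: "'a::field poly \<Rightarrow> 'a poly set" where
  "res_sys g = {b. degree b < degree g}"

text \<open>A multivariate polynomial F in A[x_1,...,x_r] is given by a finite set E of exponent
  vectors (lists of length r) and coefficients c; its value at bs is
  sum_{e in E} c e * prod_{i<r} (bs!i)^(e!i).\<close>
definition mpoly_eval :: "nat list set \<Rightarrow> (nat list \<Rightarrow> 'a::comm_ring_1 poly) \<Rightarrow> 'a poly list \<Rightarrow> 'a poly" where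
  "mpoly_eval E c bs = (\<Sum>e\<in>E. c e * (\<Prod>i<length bs. (bs ! i) ^ (e ! i)))"

definition is_poly_function :: "'a::field poly list \<Rightarrow> 'a poly \<Rightarrow> ('a poly list \<Rightarrow> 'a poly) \<Rightarrow> bool" where
  "is_poly_function fs g h \<longleftrightarrow>
     (\<exists>E c. finite E \<and> (\<forall>e\<in>E. length e = length fs) \<and>
        (\<forall>bs\<in>dom_res fs. mpoly_eval E c bs mod g = h bs mod g))"

definition num_poly_functions :: "'a::field poly list \<Rightarrow> 'a poly \<Rightarrow> nat" where
  "num_poly_functions fs g =
     card {h \<in> dom_res fs \<rightarrow>\<^sub>E res_sys g. is_poly_function fs g h}"

end

theory Submission
  imports Defs "HOL-Library.Cardinality"
begin

text \<open>The polynomials \<open>\<Prod>j<k. (x - a_j)\<close> play over \<open>F_q[t]\<close> the role of binomial coefficients.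
  The generalized factorial \<open>k!_a = \<Prod>j<k. (a_k - a_j)\<close> divides \<open>\<Prod>j<k. (b - a_j)\<close> for every \<open>b\<close>,
  because every block of \<open>q^deg m\<close> consecutive \<open>a_j\<close> meets each residue class modulo \<open>m\<close> exactly
  once. Hence every polynomial function has a normal form \<open>\<Sum>k. C_k \<Prod>i. \<Prod>j<k_i. (x_i - a_j)\<close>:
  summands with some \<open>k_i \<ge> \<mu>(f_i, g)\<close> vanish modulo \<open>g\<close> on the domain (all residues modulo \<open>f_i\<close>
  are roots, or \<open>g\<close> divides the product by the choice of \<open>\<lambda>(g)\<close>), and evaluation at
  \<open>(a_k_1, \<dots>, a_k_r)\<close> is triangular with diagonal \<open>\<Prod>i. k_i!_a\<close>, so \<open>C_k\<close> is determined
  exactly modulo \<open>g / gcd(g, \<Prod>i. k_i!_a)\<close>.\<close>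

lemma sum_card_filter_swap:
  assumes "finite A" "finite B"
  shows "(\<Sum>x\<in>A. card {y\<in>B. R x y}) = (\<Sum>y\<in>B. card {x\<in>A. R x y})"
proof -
  have card_eq: "card {x\<in>X. P x} = (\<Sum>x\<in>X. if P x then 1 else 0)" if "finite X" for X and P :: "'c \<Rightarrow> bool"
    using that by (simp add: sum.inter_filter[symmetric])
  show ?thesis
    using assms by (simp add: card_eq sum.swap[of _ A B])
qed

lemma multiplicity_eq_card_dvd_powers:
  fixes p z :: "'b::factorial_semiring"
  assumes "z \<noteq> 0" "\<not> is_unit p" "multiplicity p z \<le> M"
  shows "multiplicity p z = card {e\<in>{1..M}. p ^ e dvd z}"
proof -
  have "{e\<in>{1..M}. p ^ e dvd z} = {1..multiplicity p z}"
  proof (rule set_eqI)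
    fix e
    show "e \<in> {e\<in>{1..M}. p ^ e dvd z} \<longleftrightarrow> e \<in> {1..multiplicity p z}"
      using assms(3) power_dvd_iff_le_multiplicity[OF assms(1,2), of e] by auto
  qed
  then show ?thesis by simp
qed

text \<open>Legendre-type counting: the multiplicity of a prime \<open>p\<close> in \<open>\<Prod>j<k. x j\<close> is
  \<open>\<Sum>e\<ge>1. #{j<k. p^e dvd x j}\<close>.\<close>
lemma prod_dvd_prod_of_card_dvd_le:
  fixes x y :: "nat \<Rightarrow> 'b::factorial_semiring"
  assumes x_nz: "\<forall>j<k. x j \<noteq> 0" and y_nz: "\<forall>j<k. y j \<noteq> 0"
    and card_le: "\<And>m. m \<noteq> 0 \<Longrightarrow> \<not> is_unit m \<Longrightarrow>
      card {j\<in>{..<k}. m dvd x j} \<le> card {j\<in>{..<k}. m dvd y j}"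
  shows "(\<Prod>j<k. x j) dvd (\<Prod>j<k. y j)"
proof (rule multiplicity_le_imp_dvd)
  show "(\<Prod>j<k. x j) \<noteq> 0" using x_nz by simp
next
  fix p :: 'b assume "prime p"
  then have p: "prime_elem p" "p \<noteq> 0" "\<not> is_unit p" by auto
  define M where "M = (\<Sum>j<k. multiplicity p (x j)) + (\<Sum>j<k. multiplicity p (y j))"
  have M_ge: "multiplicity p (x j) \<le> M" "multiplicity p (y j) \<le> M" if "j < k" for j
  proof -
    have "multiplicity p (x j) \<le> (\<Sum>j<k. multiplicity p (x j))"
      "multiplicity p (y j) \<le> (\<Sum>j<k. multiplicity p (y j))"
      using that by (intro member_le_sum, simp_all)+
    then show "multiplicity p (x j) \<le> M" "multiplicity p (y j) \<le> M"
      unfolding M_def by linarith+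
  qed
  have multiplicity_prod: "multiplicity p (\<Prod>j<k. z j) = (\<Sum>e\<in>{1..M}. card {j\<in>{..<k}. p ^ e dvd z j})"
    if "\<forall>j<k. z j \<noteq> 0" "\<forall>j<k. multiplicity p (z j) \<le> M" for z
  proof -
    have "multiplicity p (\<Prod>j<k. z j) = (\<Sum>j<k. multiplicity p (z j))"
      using that by (intro prime_elem_multiplicity_prod_distrib[OF p(1)]) auto
    also have "\<dots> = (\<Sum>j<k. card {e\<in>{1..M}. p ^ e dvd z j})"
      using that p by (intro sum.cong refl multiplicity_eq_card_dvd_powers) auto
    also have "\<dots> = (\<Sum>e\<in>{1..M}. card {j\<in>{..<k}. p ^ e dvd z j})"
      by (rule sum_card_filter_swap) auto
    finally show ?thesis .
  qed
  have "multiplicity p (\<Prod>j<k. x j) = (\<Sum>e\<in>{1..M}. card {j\<in>{..<k}. p ^ e dvd x j})"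
    using x_nz M_ge(1) by (intro multiplicity_prod allI impI) auto
  also have "\<dots> \<le> (\<Sum>e\<in>{1..M}. card {j\<in>{..<k}. p ^ e dvd y j})"
  proof (rule sum_mono)
    fix e :: nat assume "e \<in> {1..M}"
    then have "p ^ e \<noteq> 0" "\<not> is_unit (p ^ e)" using p by (auto simp: is_unit_power_iff)
    then show "card {j\<in>{..<k}. p ^ e dvd x j} \<le> card {j\<in>{..<k}. p ^ e dvd y j}" by (rule card_le)
  qed
  also have "\<dots> = multiplicity p (\<Prod>j<k. y j)"
    using y_nz M_ge(2) by (intro multiplicity_prod[symmetric] allI impI) auto
  finally show "multiplicity p (\<Prod>j<k. x j) \<le> multiplicity p (\<Prod>j<k. y j)" .
qed

definition list_box :: "nat \<Rightarrow> (nat \<Rightarrow> 'b set) \<Rightarrow> 'b list set" where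
  "list_box n S = {xs. length xs = n \<and> (\<forall>i<n. xs ! i \<in> S i)}"

lemma list_box_eq_image_PiE: "list_box n S = (\<lambda>f. map f [0..<n]) ` PiE {..<n} S"
proof (intro equalityI subsetI)
  fix xs assume xs: "xs \<in> list_box n S"
  have "xs = map (\<lambda>i\<in>{..<n}. xs ! i) [0..<n]"
    using xs by (intro nth_equalityI) (simp_all add: list_box_def)
  moreover have "(\<lambda>i\<in>{..<n}. xs ! i) \<in> PiE {..<n} S"
    using xs by (simp add: list_box_def)
  ultimately show "xs \<in> (\<lambda>f. map f [0..<n]) ` PiE {..<n} S" by blast
next
  fix xs assume "xs \<in> (\<lambda>f. map f [0..<n]) ` PiE {..<n} S"
  then obtain f where "f \<in> PiE {..<n} S" "xs = map f [0..<n]" by blast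
  then show "xs \<in> list_box n S" by (simp add: list_box_def PiE_iff)
qed

lemma inj_on_map_upt_PiE: "inj_on (\<lambda>f. map f [0..<n]) (PiE {..<n} S)"
proof (rule inj_onI)
  fix f h assume f: "f \<in> PiE {..<n} S" and h: "h \<in> PiE {..<n} S"
    and eq: "map f [0..<n] = map h [0..<n]"
  have "f i = h i" if "i \<in> {..<n}" for i
    using arg_cong[OF eq, of "\<lambda>xs. xs ! i"] that by simp
  then show "f = h" using f h by (rule PiE_ext[rotated 2])
qed

lemma finite_list_box: "(\<And>i. i < n \<Longrightarrow> finite (S i)) \<Longrightarrow> finite (list_box n S)"
  unfolding list_box_eq_image_PiE by (intro finite_imageI finite_PiE) auto

lemma prod_sum_list_box:
  fixes f :: "nat \<Rightarrow> 'b \<Rightarrow> 'c::comm_semiring_1"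
  assumes "\<And>i. i < n \<Longrightarrow> finite (S i)"
  shows "(\<Prod>i<n. \<Sum>x\<in>S i. f i x) = (\<Sum>xs\<in>list_box n S. \<Prod>i<n. f i (xs ! i))"
proof -
  have "(\<Prod>i<n. \<Sum>x\<in>S i. f i x) = (\<Sum>h\<in>PiE {..<n} S. \<Prod>i<n. f i (h i))"
    using assms by (intro prod_sum_PiE) auto
  also have "\<dots> = (\<Sum>h\<in>PiE {..<n} S. \<Prod>i<n. f i (map h [0..<n] ! i))"
    by (intro sum.cong prod.cong) auto
  also have "\<dots> = (\<Sum>xs\<in>list_box n S. \<Prod>i<n. f i (xs ! i))"
    unfolding list_box_eq_image_PiE by (rule sum.reindex[OF inj_on_map_upt_PiE, symmetric, unfolded o_def])
  finally show ?thesis .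
qed

lemma poly_eq_sum_coeff_power:
  fixes p :: "'b::comm_semiring_1 poly"
  assumes "degree p \<le> N"
  shows "poly p x = (\<Sum>i\<le>N. coeff p i * x ^ i)"
proof -
  have "poly p x = (\<Sum>i\<le>degree p. coeff p i * x ^ i)" by (rule poly_altdef)
  also have "\<dots> = (\<Sum>i\<le>N. coeff p i * x ^ i)"
    using assms by (intro sum.mono_neutral_left) (auto simp: coeff_eq_0)
  finally show ?thesis .
qed

lemma prod_poly_eq_mpoly_eval:
  fixes P :: "nat \<Rightarrow> 'b::comm_ring_1 poly poly"
  assumes "\<And>i. i < length bs \<Longrightarrow> degree (P i) \<le> N"
  shows "(\<Prod>i<length bs. poly (P i) (bs ! i)) =
    mpoly_eval (list_box (length bs) (\<lambda>_. {..N})) (\<lambda>e. \<Prod>i<length bs. coeff (P i) (e ! i)) bs"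
proof -
  have "(\<Prod>i<length bs. poly (P i) (bs ! i)) =
      (\<Prod>i<length bs. \<Sum>k\<le>N. coeff (P i) k * (bs ! i) ^ k)"
    using assms by (intro prod.cong refl poly_eq_sum_coeff_power) simp
  also have "\<dots> = (\<Sum>e\<in>list_box (length bs) (\<lambda>_. {..N}).
      \<Prod>i<length bs. coeff (P i) (e ! i) * (bs ! i) ^ (e ! i))"
    by (rule prod_sum_list_box) simp
  also have "\<dots> = mpoly_eval (list_box (length bs) (\<lambda>_. {..N}))
      (\<lambda>e. \<Prod>i<length bs. coeff (P i) (e ! i)) bs"
    by (simp add: mpoly_eval_def prod.distrib)
  finally show ?thesis .
qed

lemma sum_mult_mpoly_eval:
  assumes "finite K" "finite E"
  shows "(\<Sum>k\<in>K. C k * mpoly_eval E (c k) bs) = mpoly_eval E (\<lambda>e. \<Sum>k\<in>K. C k * c k e) bs"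
  using assms by (simp add: mpoly_eval_def sum_distrib_left sum_distrib_right mult.assoc sum.swap[of _ K E])

lemma sum_list_less_of_pointwise_le:
  fixes xs ys :: "nat list"
  assumes "length xs = length ys" "\<forall>i<length ys. xs ! i \<le> ys ! i" "xs \<noteq> ys"
  shows "sum_list xs < sum_list ys"
proof -
  obtain i where i: "i < length ys" "xs ! i \<noteq> ys ! i"
    using assms(1,3) by (auto simp: list_eq_iff_nth_eq)
  have "(\<Sum>i<length ys. xs ! i) < (\<Sum>i<length ys. ys ! i)"
    using assms(2) i by (intro sum_strict_mono_ex1) (auto intro!: bexI[of _ i])
  then show ?thesis using assms(1) by (simp add: sum_list_sum_nth atLeast0LessThan)
qed

lemma dvd_mult_iff_div_gcd_dvd:
  fixes g f d :: "'b::semiring_gcd"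
  assumes "g \<noteq> 0"
  shows "g dvd d * f \<longleftrightarrow> g div gcd g f dvd d"
proof
  let ?G = "gcd g f"
  have "?G \<noteq> 0" using assms by simp
  assume "g dvd d * f"
  then have "(g div ?G) * ?G dvd (d * (f div ?G)) * ?G" by (simp add: mult.assoc)
  then have "g div ?G dvd d * (f div ?G)" using \<open>?G \<noteq> 0\<close> dvd_times_right_cancel_iff by blast
  moreover have "coprime (g div ?G) (f div ?G)" using assms by (intro div_gcd_coprime) simp
  ultimately show "g div ?G dvd d" by (simp add: coprime_dvd_mult_left_iff)
next
  let ?G = "gcd g f"
  assume "g div ?G dvd d"
  then have "(g div ?G) * ?G dvd d * f" by (intro mult_dvd_mono) auto
  then show "g dvd d * f" by simp
qed

section \<open>The digit polynomials \<open>a_k\<close>\<close>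

locale digit_enum =
  fixes enum :: "nat \<Rightarrow> 'a::{field_gcd,finite}"
  assumes bij_enum: "bij_betw enum {..<card (UNIV :: 'a set)} (UNIV :: 'a set)"
    and enum_0: "enum 0 = 0"
begin

abbreviation a :: "nat \<Rightarrow> 'a poly" where "a \<equiv> a_poly enum"

lemma card_ge_2: "2 \<le> CARD('a)"
proof -
  have "card {0::'a, 1} \<le> CARD('a)" by (rule card_mono) auto
  then show ?thesis by simp
qed

lemma enum_eq_iff: "i < CARD('a) \<Longrightarrow> j < CARD('a) \<Longrightarrow> enum i = enum j \<longleftrightarrow> i = j"
  using bij_betw_imp_inj_on[OF bij_enum] by (auto dest: inj_onD)

lemma coeff_a: "coeff (a k) s = enum (k div CARD('a) ^ s mod CARD('a))"
proof (cases "s \<le> k")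
  case True
  then show ?thesis by (simp add: a_poly_def coeff_sum coeff_monom)
next
  case False
  have "k < 2 ^ s" using False less_exp[of s] by linarith
  also have "\<dots> \<le> CARD('a) ^ s" using card_ge_2 by (rule power_mono) simp
  finally show ?thesis using False enum_0 by (simp add: a_poly_def coeff_sum coeff_monom)
qed

lemma a_rec: "a k = pCons (enum (k mod CARD('a))) (a (k div CARD('a)))"
proof (rule poly_eqI)
  fix n show "coeff (a k) n = coeff (pCons (enum (k mod CARD('a))) (a (k div CARD('a)))) n"
    by (cases n) (simp_all add: coeff_a div_mult2_eq mult.commute)
qed

lemma a_0 [simp]: "a 0 = 0"
  by (simp add: a_poly_def enum_0)

lemma a_inj: "a k = a j \<Longrightarrow> k = j"
proof (induction "k + j" arbitrary: k j rule: less_induct)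
  case less
  then have "enum (k mod CARD('a)) = enum (j mod CARD('a))" "a (k div CARD('a)) = a (j div CARD('a))"
    using a_rec[of k] a_rec[of j] by simp_all
  then have mod_eq: "k mod CARD('a) = j mod CARD('a)" and "a (k div CARD('a)) = a (j div CARD('a))"
    using card_ge_2 enum_eq_iff by simp_all
  show ?case
  proof (cases "k + j = 0")
    case False
    have "k div CARD('a) < k \<or> j div CARD('a) < j"
      using False card_ge_2 by (auto intro: div_less_dividend)
    then have "k div CARD('a) + j div CARD('a) < k + j"
      using div_le_dividend[of k "CARD('a)"] div_le_dividend[of j "CARD('a)"] by linarith
    then have "k div CARD('a) = j div CARD('a)" using less.hyps \<open>a (k div CARD('a)) = a (j div CARD('a))\<close> by blast
    then show ?thesis using mod_eq by (metis div_mult_mod_eq)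
  qed simp
qed

lemma a_eq_0_or_degree_less: "w < CARD('a) ^ d \<Longrightarrow> a w = 0 \<or> degree (a w) < d"
proof (induction d arbitrary: w)
  case (Suc d)
  then have "w div CARD('a) < CARD('a) ^ d" by (simp add: less_mult_imp_div_less mult.commute)
  then show ?case using Suc.IH by (subst a_rec) auto
qed simp

lemma a_surj: "p = 0 \<or> degree p < d \<Longrightarrow> \<exists>w<CARD('a) ^ d. a w = p"
proof (induction d arbitrary: p)
  case 0
  then show ?case by auto
next
  case (Suc d)
  obtain c p' where p: "p = pCons c p'" by (cases p) auto
  have "p' = 0 \<or> degree p' < d" using Suc.prems p by (cases "p' = 0") auto
  then obtain w' where w': "w' < CARD('a) ^ d" "a w' = p'" using Suc.IH by blast
  obtain i where i: "i < CARD('a)" "enum i = c"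
    using bij_betw_imp_surj_on[OF bij_enum] by (metis UNIV_I imageE lessThan_iff)
  define w where "w = i + CARD('a) * w'"
  have "w mod CARD('a) = i" "w div CARD('a) = w'" using i by (simp_all add: w_def)
  then have "a w = p" using p w' i by (subst a_rec) simp
  moreover have "w < CARD('a) ^ Suc d"
  proof -
    have "w < CARD('a) * (w' + 1)" using i by (simp add: w_def)
    also have "\<dots> \<le> CARD('a) * CARD('a) ^ d" using w' by (intro mult_le_mono2) simp
    finally show ?thesis by simp
  qed
  ultimately show ?case by blast
qed

lemma card_polys_degree_less: "card {p :: 'a poly. p = 0 \<or> degree p < d} = CARD('a) ^ d"
proof -
  have "{p :: 'a poly. p = 0 \<or> degree p < d} = a ` {..<CARD('a) ^ d}"
  proof (intro equalityI subsetI)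
    fix p :: "'a poly" assume "p \<in> {p. p = 0 \<or> degree p < d}"
    then show "p \<in> a ` {..<CARD('a) ^ d}" using a_surj[of p d] by auto
  qed (use a_eq_0_or_degree_less in auto)
  moreover have "inj_on a {..<CARD('a) ^ d}" by (auto intro: inj_onI a_inj)
  ultimately show ?thesis by (simp add: card_image)
qed

lemma a_add_mult_power: "w < CARD('a) ^ d \<Longrightarrow> a (i * CARD('a) ^ d + w) = monom 1 d * a i + a w"
proof (induction d arbitrary: w)
  case (Suc d)
  let ?n = "i * CARD('a) ^ d"
  have "w div CARD('a) < CARD('a) ^ d" using Suc.prems by (simp add: less_mult_imp_div_less mult.commute)
  then have IH: "a (?n + w div CARD('a)) = monom 1 d * a i + a (w div CARD('a))" by (rule Suc.IH)
  have mod_eq: "(CARD('a) * ?n + w) mod CARD('a) = w mod CARD('a)"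
    and div_eq: "(CARD('a) * ?n + w) div CARD('a) = ?n + w div CARD('a)"
    using card_ge_2 by simp_all
  have "a (i * CARD('a) ^ Suc d + w) = a (CARD('a) * ?n + w)" by (simp add: mult.left_commute)
  also have "\<dots> = pCons (enum (w mod CARD('a))) (monom 1 d * a i + a (w div CARD('a)))"
    by (subst a_rec) (simp only: mod_eq div_eq IH)
  also have "\<dots> = monom 1 (Suc d) * a i + a w"
    by (subst (2) a_rec) (simp add: monom_Suc)
  finally show ?case .
qed simp

section \<open>Generalized factorials\<close>

definition falling :: "nat \<Rightarrow> 'a poly \<Rightarrow> 'a poly" where
  "falling k b = (\<Prod>j<k. b - a j)"

lemma falling_a_eq_0: "j < k \<Longrightarrow> falling k (a j) = 0"
  unfolding falling_def by (auto intro: prod_zero)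

lemma eq_of_dvd_a_diff_same_block:
  assumes "0 < degree m" and "j div CARD('a) ^ degree m = j' div CARD('a) ^ degree m"
    and "m dvd a j - a j'"
  shows "j = j'"
proof -
  define Q where "Q = CARD('a) ^ degree m"
  have "0 < Q" using card_ge_2 by (simp add: Q_def)
  have split: "a l = monom 1 (degree m) * a (l div Q) + a (l mod Q)" for l
  proof -
    have "a l = a (l div Q * Q + l mod Q)" by simp
    also have "\<dots> = monom 1 (degree m) * a (l div Q) + a (l mod Q)"
      unfolding Q_def by (rule a_add_mult_power) (use \<open>0 < Q\<close> in \<open>simp add: Q_def\<close>)
    finally show ?thesis .
  qed
  have "a j - a j' = a (j mod Q) - a (j' mod Q)"
    using assms(2) by (subst (1 2) split) (simp add: Q_def)
  then have dvd: "m dvd a (j mod Q) - a (j' mod Q)" using assms(3) by simp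
  have "a (j mod Q) = a (j' mod Q)"
  proof (rule ccontr)
    assume "a (j mod Q) \<noteq> a (j' mod Q)"
    then have "degree m \<le> degree (a (j mod Q) - a (j' mod Q))"
      using dvd by (intro dvd_imp_degree_le) auto
    also have "\<dots> \<le> max (degree (a (j mod Q))) (degree (a (j' mod Q)))"
      by (rule degree_diff_le_max)
    also have "\<dots> < degree m"
      using a_eq_0_or_degree_less[of "j mod Q" "degree m"] a_eq_0_or_degree_less[of "j' mod Q" "degree m"]
        \<open>0 < Q\<close> assms(1) by (auto simp: Q_def)
    finally show False by simp
  qed
  then have "j mod Q = j' mod Q" by (rule a_inj)
  then show ?thesis using assms(2) by (metis Q_def div_mult_mod_eq)
qed

text \<open>Among \<open>a_0, \<dots>, a_(k-1)\<close> every residue class modulo \<open>m\<close> has at least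
  \<open>k div q^deg m\<close> members (one per complete block), and the class of \<open>a_k\<close> has at most that many.\<close>

lemma card_dvd_a_diff_le:
  assumes "0 < degree m"
  shows "card {j\<in>{..<k}. m dvd a k - a j} \<le> k div CARD('a) ^ degree m"
proof -
  define Q where "Q = CARD('a) ^ degree m"
  let ?S = "{j\<in>{..<k}. m dvd a k - a j}"
  have inj: "inj_on (\<lambda>j. j div Q) ?S"
  proof (rule inj_onI)
    fix j j' assume j: "j \<in> ?S" and j': "j' \<in> ?S" and same_block: "j div Q = j' div Q"
    have "m dvd (a k - a j') - (a k - a j)"
      by (rule dvd_diff) (use j j' in auto)
    then have "m dvd a j - a j'" by simp
    then show "j = j'"
      by (rule eq_of_dvd_a_diff_same_block[OF assms, rotated]) (use same_block in \<open>simp add: Q_def\<close>)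
  qed
  have img: "(\<lambda>j. j div Q) ` ?S \<subseteq> {..<k div Q}"
  proof clarify
    fix j assume j: "j < k" "m dvd a k - a j"
    have "j div Q \<noteq> k div Q"
      using eq_of_dvd_a_diff_same_block[OF assms, of k j] j by (auto simp: Q_def)
    moreover have "j div Q \<le> k div Q" using j by (simp add: div_le_mono)
    ultimately show "j div Q < k div Q" by simp
  qed
  have "card ?S = card ((\<lambda>j. j div Q) ` ?S)" using inj by (simp add: card_image)
  also have "\<dots> \<le> card {..<k div Q}" using img by (intro card_mono) auto
  finally show ?thesis by (simp add: Q_def)
qed

lemma card_dvd_diff_a_ge:
  assumes "m \<noteq> 0"
  shows "k div CARD('a) ^ degree m \<le> card {j\<in>{..<k}. m dvd b - a j}"
proof -
  define d where "d = degree m"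
  define Q where "Q = CARD('a) ^ d"
  have "0 < Q" using card_ge_2 by (simp add: Q_def)
  have "\<forall>i. \<exists>w<Q. a w = (b - monom 1 d * a i) mod m"
    using a_surj degree_mod_less[OF assms] by (simp add: Q_def d_def)
  then obtain w where w: "\<And>i. w i < Q" "\<And>i. a (w i) = (b - monom 1 d * a i) mod m"
    by metis
  let ?f = "\<lambda>i. i * Q + w i"
  have inj: "inj_on ?f {..<k div Q}"
  proof (rule inj_onI)
    fix i i' assume "?f i = ?f i'"
    then have "?f i div Q = ?f i' div Q" by simp
    then show "i = i'" using w(1)[of i] w(1)[of i'] by simp
  qed
  have img: "?f ` {..<k div Q} \<subseteq> {j\<in>{..<k}. m dvd b - a j}"
  proof (rule image_subsetI)
    fix i assume "i \<in> {..<k div Q}"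
    then have "?f i < (i + 1) * Q" "(i + 1) * Q \<le> k"
      using w(1)[of i] less_eq_div_iff_mult_less_eq[OF \<open>0 < Q\<close>, of "i + 1" k] by simp_all
    moreover have "b - a (?f i) = (b - monom 1 d * a i) - (b - monom 1 d * a i) mod m"
      using a_add_mult_power[OF w(1)[of i, unfolded Q_def]] w(2)[of i] by (simp add: Q_def)
    ultimately show "?f i \<in> {j\<in>{..<k}. m dvd b - a j}"
      by (simp add: minus_mod_eq_mult_div)
  qed
  have "k div Q = card (?f ` {..<k div Q})" using inj by (simp add: card_image)
  also have "\<dots> \<le> card {j\<in>{..<k}. m dvd b - a j}" using img by (intro card_mono) auto
  finally show ?thesis by (simp add: Q_def d_def)
qed

lemma falling_self_dvd: "falling k (a k) dvd falling k b"
proof (cases "\<exists>j<k. b = a j")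
  case True
  then show ?thesis using falling_a_eq_0 by auto
next
  case False
  show ?thesis unfolding falling_def
  proof (rule prod_dvd_prod_of_card_dvd_le)
    show "\<forall>j<k. a k - a j \<noteq> 0" using a_inj by fastforce
    show "\<forall>j<k. b - a j \<noteq> 0" using False by auto
    fix m :: "'a poly" assume "m \<noteq> 0" "\<not> is_unit m"
    then have "0 < degree m" by (simp add: is_unit_iff_degree)
    then show "card {j\<in>{..<k}. m dvd a k - a j} \<le> card {j\<in>{..<k}. m dvd b - a j}"
      using card_dvd_a_diff_le card_dvd_diff_a_ge \<open>m \<noteq> 0\<close> le_trans by blast
  qed
qed

lemma dvd_falling_lambda:
  assumes "0 < degree g"
  shows "g dvd falling (lambda_fn enum g) (a (lambda_fn enum g))"
proof -
  define K where "K = CARD('a) ^ degree g"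
  have "g \<noteq> 0" using assms by auto
  obtain j where j: "j < K" "a j = a K mod g"
    using a_surj degree_mod_less[OF \<open>g \<noteq> 0\<close>] unfolding K_def by blast
  have "g dvd a K - a j" using j(2) by (simp add: minus_mod_eq_mult_div)
  also have "a K - a j dvd falling K (a K)" unfolding falling_def using j(1) by (intro dvd_prodI) auto
  finally have "0 < K \<and> g dvd falling K (a K)" using card_ge_2 by (simp add: K_def)
  then show ?thesis
    unfolding lambda_fn_def falling_def[symmetric]
    by (rule LeastI[where P = "\<lambda>k. 0 < k \<and> g dvd falling k (a k)", THEN conjunct2])
qed

lemma dvd_falling_of_lambda_le:
  assumes "0 < degree g" "lambda_fn enum g \<le> k"
  shows "g dvd falling k b"
proof -
  have "g dvd falling (lambda_fn enum g) (a (lambda_fn enum g))" by (rule dvd_falling_lambda[OF assms(1)])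
  also have "\<dots> dvd falling (lambda_fn enum g) b" by (rule falling_self_dvd)
  also have "\<dots> dvd falling k b" unfolding falling_def using assms(2) by (intro prod_dvd_prod_subset) auto
  finally show ?thesis .
qed

definition falling_poly :: "nat \<Rightarrow> 'a poly poly" where
  "falling_poly k = (\<Prod>j<k. [:- a j, 1:])"

lemma poly_falling_poly: "poly (falling_poly k) b = falling k b"
  by (simp add: falling_poly_def falling_def poly_prod)

lemma degree_falling_poly: "degree (falling_poly k) = k"
  by (simp add: falling_poly_def degree_prod_sum_eq)

lemma lead_coeff_falling_poly: "lead_coeff (falling_poly k) = 1"
  by (simp add: falling_poly_def lead_coeff_prod)

lemma poly_eq_sum_falling:
  fixes p :: "'a poly poly"
  assumes "degree p \<le> n"
  shows "\<exists>\<beta>. \<forall>b. poly p b = (\<Sum>k\<le>n. \<beta> k * falling k b)"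
  using assms
proof (induction n arbitrary: p)
  case 0
  then have p: "p = [:coeff p 0:]" by (simp add: degree_0_id)
  have "poly p b = (\<Sum>k\<le>0. coeff p 0 * falling k b)" for b by (subst p) (simp add: falling_def)
  then show ?case by (intro exI[of _ "\<lambda>_. coeff p 0"]) simp
next
  case (Suc n)
  define c where "c = coeff p (Suc n)"
  have "degree (p - smult c (falling_poly (Suc n))) \<le> n"
  proof (rule degree_le, intro allI impI)
    fix i assume "n < i"
    with Suc.prems show "coeff (p - smult c (falling_poly (Suc n))) i = 0"
      using lead_coeff_falling_poly[of "Suc n"] degree_falling_poly[of "Suc n"]
      by (cases "i = Suc n") (auto simp: c_def coeff_eq_0)
  qed
  then obtain \<beta> where \<beta>: "\<forall>b. poly (p - smult c (falling_poly (Suc n))) b = (\<Sum>k\<le>n. \<beta> k * falling k b)"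
    using Suc.IH by blast
  have "poly p b = (\<Sum>k\<le>Suc n. (\<beta>(Suc n := c)) k * falling k b)" for b
    using \<beta>[rule_format, of b] by (simp add: poly_falling_poly algebra_simps)
  then show ?case by blast
qed

definition falling_prod :: "nat list \<Rightarrow> 'a poly list \<Rightarrow> 'a poly" where
  "falling_prod ks bs = (\<Prod>i<length ks. falling (ks ! i) (bs ! i))"

lemma falling_prod_self_dvd: "falling_prod ks (map a ks) dvd falling_prod ks bs"
  unfolding falling_prod_def by (intro prod_dvd_prod) (simp add: falling_self_dvd)

lemma falling_prod_map_a_eq_0:
  assumes "length ks' = length ks" "i < length ks" "ks' ! i < ks ! i"
  shows "falling_prod ks (map a ks') = 0"
  unfolding falling_prod_def using assms by (intro prod_zero bexI[of _ i]) (auto simp: falling_a_eq_0)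

lemma falling_sum_eq_mpoly_eval:
  assumes "finite K" "\<forall>ks\<in>K. length ks = n"
  obtains E c where "finite E" "\<forall>e\<in>E. length e = n"
    "\<And>bs. length bs = n \<Longrightarrow> (\<Sum>ks\<in>K. C ks * falling_prod ks bs) = mpoly_eval E c bs"
proof -
  define N where "N = (\<Sum>ks\<in>K. sum_list ks)"
  define E where "E = list_box n (\<lambda>_. {..N})"
  have bound: "ks ! i \<le> N" if "ks \<in> K" "i < n" for ks i
  proof -
    have "ks ! i \<le> sum_list ks" using that assms(2) by (intro elem_le_sum_list) auto
    also have "\<dots> \<le> N" unfolding N_def using that assms(1) by (intro member_le_sum) auto
    finally show ?thesis .
  qed
  have "(\<Sum>ks\<in>K. C ks * falling_prod ks bs) =
      mpoly_eval E (\<lambda>e. \<Sum>ks\<in>K. C ks * (\<Prod>i<n. coeff (falling_poly (ks ! i)) (e ! i))) bs"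
    if bs: "length bs = n" for bs
  proof -
    have "falling_prod ks bs = mpoly_eval E (\<lambda>e. \<Prod>i<n. coeff (falling_poly (ks ! i)) (e ! i)) bs"
      if "ks \<in> K" for ks
    proof -
      have "falling_prod ks bs = (\<Prod>i<length bs. poly (falling_poly (ks ! i)) (bs ! i))"
        using that assms(2) bs by (simp add: falling_prod_def poly_falling_poly)
      also have "\<dots> = mpoly_eval E (\<lambda>e. \<Prod>i<n. coeff (falling_poly (ks ! i)) (e ! i)) bs"
        using that bound bs by (subst prod_poly_eq_mpoly_eval[where N = N]) (simp_all add: degree_falling_poly E_def)
      finally show ?thesis .
    qed
    then show ?thesis
      using assms(1) by (simp add: sum_mult_mpoly_eval E_def finite_list_box)
  qed
  moreover have "finite E" by (simp add: E_def finite_list_box)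
  moreover have "\<forall>e\<in>E. length e = n" by (simp add: E_def list_box_def)
  ultimately show thesis by (intro that)
qed

lemma mpoly_eval_eq_falling_sum:
  assumes "finite E" "\<forall>e\<in>E. length e = n \<and> (\<forall>i<n. e ! i \<le> N)"
  obtains G where "\<And>bs. length bs = n \<Longrightarrow>
    mpoly_eval E c bs = (\<Sum>ks\<in>list_box n (\<lambda>_. {..N}). G ks * falling_prod ks bs)"
proof -
  have "\<forall>m. \<exists>\<beta>. m \<le> N \<longrightarrow> (\<forall>b. b ^ m = (\<Sum>k\<le>N. \<beta> k * falling k b))"
    using poly_eq_sum_falling[of "monom 1 _" N] by (auto simp: degree_monom_eq poly_monom)
  then obtain B where B: "\<And>m b. m \<le> N \<Longrightarrow> b ^ m = (\<Sum>k\<le>N. B m k * falling k b)"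
    by metis
  define L where "L = list_box n (\<lambda>_. {..N})"
  define G where "G ks = (\<Sum>e\<in>E. c e * (\<Prod>i<n. B (e ! i) (ks ! i)))" for ks
  have "mpoly_eval E c bs = (\<Sum>ks\<in>L. G ks * falling_prod ks bs)" if bs: "length bs = n" for bs
  proof -
    have monomial: "(\<Prod>i<n. (bs ! i) ^ (e ! i)) = (\<Sum>ks\<in>L. (\<Prod>i<n. B (e ! i) (ks ! i)) * falling_prod ks bs)"
      if "e \<in> E" for e
    proof -
      have "(\<Prod>i<n. (bs ! i) ^ (e ! i)) = (\<Prod>i<n. \<Sum>k\<le>N. B (e ! i) k * falling k (bs ! i))"
        using that assms(2) by (intro prod.cong refl B) auto
      also have "\<dots> = (\<Sum>ks\<in>L. \<Prod>i<n. B (e ! i) (ks ! i) * falling (ks ! i) (bs ! i))"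
        unfolding L_def by (rule prod_sum_list_box) simp
      also have "\<dots> = (\<Sum>ks\<in>L. (\<Prod>i<n. B (e ! i) (ks ! i)) * falling_prod ks bs)"
        by (intro sum.cong refl) (simp add: L_def list_box_def falling_prod_def prod.distrib)
      finally show ?thesis .
    qed
    have "mpoly_eval E c bs = (\<Sum>e\<in>E. c e * (\<Sum>ks\<in>L. (\<Prod>i<n. B (e ! i) (ks ! i)) * falling_prod ks bs))"
      unfolding mpoly_eval_def using bs monomial by (intro sum.cong refl) simp
    also have "\<dots> = (\<Sum>ks\<in>L. G ks * falling_prod ks bs)"
      unfolding G_def by (simp add: sum_distrib_left sum_distrib_right mult.assoc sum.swap[of _ E L])
    finally show ?thesis .
  qed
  then show thesis unfolding L_def by (rule that)
qed

end

section \<open>Normal form of polynomial functions\<close>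

locale poly_function_count = digit_enum enum for enum :: "nat \<Rightarrow> 'a::{field_gcd,finite}" +
  fixes fs :: "'a poly list" and g :: "'a poly"
  assumes degree_fs_pos: "\<forall>f\<in>set fs. 0 < degree f" and degree_g_pos: "0 < degree g"
begin

definition Box :: "nat list set" where
  "Box = list_box (length fs) (\<lambda>i. {..<mu_fn enum (fs ! i) g})"

definition modulus :: "nat list \<Rightarrow> 'a poly" where
  "modulus ks = g div gcd g (falling_prod ks (map a ks))"

definition residues :: "nat list \<Rightarrow> 'a poly set" where
  "residues ks = {c. c mod modulus ks = c}"

definition newton_fun :: "(nat list \<Rightarrow> 'a poly) \<Rightarrow> 'a poly list \<Rightarrow> 'a poly" where
  "newton_fun C = (\<lambda>bs\<in>dom_res fs. (\<Sum>ks\<in>Box. C ks * falling_prod ks bs) mod g)"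

lemma g_nonzero: "g \<noteq> 0"
  using degree_g_pos by auto

lemma finite_Box: "finite Box"
  by (simp add: Box_def finite_list_box)

lemma length_Box: "ks \<in> Box \<Longrightarrow> length ks = length fs"
  by (simp add: Box_def list_box_def)

lemma Box_nth_less:
  assumes "ks \<in> Box" "i < length fs"
  shows "ks ! i < CARD('a) ^ degree (fs ! i)" "ks ! i < lambda_fn enum g"
  using assms by (simp_all add: Box_def list_box_def mu_fn_def)

lemma map_a_in_dom_res: "ks \<in> Box \<Longrightarrow> map a ks \<in> dom_res fs"
proof -
  assume ks: "ks \<in> Box"
  have "degree (a (ks ! i)) < degree (fs ! i)" if "i < length fs" for i
    using a_eq_0_or_degree_less[OF Box_nth_less(1)[OF ks that]] degree_fs_pos that by auto
  then show ?thesis using length_Box[OF ks] by (simp add: dom_res_def)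
qed

lemma dvd_falling_prod_outside_Box:
  assumes "bs \<in> dom_res fs" "length ks = length fs" "ks \<notin> Box"
  shows "g dvd falling_prod ks bs"
proof -
  obtain i where i: "i < length fs" "\<not> ks ! i < mu_fn enum (fs ! i) g"
    using assms(2,3) by (auto simp: Box_def list_box_def)
  have "g dvd falling (ks ! i) (bs ! i)"
  proof (cases "CARD('a) ^ degree (fs ! i) \<le> ks ! i")
    case True
    have "bs ! i = 0 \<or> degree (bs ! i) < degree (fs ! i)"
      using assms(1) i(1) by (simp add: dom_res_def)
    then obtain j where "j < CARD('a) ^ degree (fs ! i)" "a j = bs ! i" using a_surj by blast
    then show ?thesis using True falling_a_eq_0[of j "ks ! i"] by simp
  next
    case False
    then show ?thesis using i(2) degree_g_pos by (intro dvd_falling_of_lambda_le) (auto simp: mu_fn_def)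
  qed
  also have "\<dots> dvd falling_prod ks bs"
    unfolding falling_prod_def using i(1) assms(2) by (intro dvd_prodI) auto
  finally show ?thesis .
qed

lemma modulus_dvd_iff: "modulus ks dvd d \<longleftrightarrow> g dvd d * falling_prod ks (map a ks)"
  unfolding modulus_def using g_nonzero by (rule dvd_mult_iff_div_gcd_dvd[symmetric])

lemma dvd_modulus_mult_falling_prod: "g dvd modulus ks * falling_prod ks bs"
proof -
  have "g dvd modulus ks * falling_prod ks (map a ks)" by (simp add: modulus_dvd_iff[symmetric])
  also have "\<dots> dvd modulus ks * falling_prod ks bs" by (intro mult_dvd_mono dvd_refl falling_prod_self_dvd)
  finally show ?thesis .
qed

lemma card_residues: "card (residues ks) = CARD('a) ^ degree (modulus ks)"
proof -
  have "modulus ks \<noteq> 0" using g_nonzero by (simp add: modulus_def dvd_div_eq_0_iff)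
  have "c mod modulus ks = c \<longleftrightarrow> c = 0 \<or> degree c < degree (modulus ks)" for c
  proof
    assume "c mod modulus ks = c"
    then show "c = 0 \<or> degree c < degree (modulus ks)"
      using degree_mod_less[OF \<open>modulus ks \<noteq> 0\<close>, of c] by simp
  qed (auto intro: mod_poly_less)
  then have "residues ks = {c. c = 0 \<or> degree c < degree (modulus ks)}"
    unfolding residues_def by blast
  then show ?thesis by (simp add: card_polys_degree_less)
qed

text \<open>Evaluating at \<open>map a ks\<close> kills every summand \<open>ks'\<close> with some \<open>ks' ! i > ks ! i\<close>;
  all other \<open>ks' \<noteq> ks\<close> have smaller \<open>sum_list\<close>.\<close>

lemma modulus_dvd_of_vanishing_sum:
  assumes vanish: "\<forall>bs\<in>dom_res fs. g dvd (\<Sum>ks\<in>Box. D ks * falling_prod ks bs)"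
  shows "ks \<in> Box \<Longrightarrow> modulus ks dvd D ks"
proof (induction "sum_list ks" arbitrary: ks rule: less_induct)
  case less
  have len: "length ks = length fs" using length_Box[OF less.prems] .
  have other_terms: "g dvd D ks' * falling_prod ks' (map a ks)" if ks': "ks' \<in> Box - {ks}" for ks'
  proof (cases "\<exists>i<length fs. ks ! i < ks' ! i")
    case True
    then show ?thesis using len length_Box[of ks'] ks' falling_prod_map_a_eq_0 by fastforce
  next
    case False
    then have "sum_list ks' < sum_list ks"
      using len length_Box[of ks'] ks' by (intro sum_list_less_of_pointwise_le) auto
    then have "modulus ks' dvd D ks'" using less.hyps ks' by blast
    then obtain x where "D ks' = modulus ks' * x" by blast
    then show ?thesis
      using dvd_mult[OF dvd_modulus_mult_falling_prod[of ks' "map a ks"], of x] by (simp add: ac_simps)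
  qed
  have "g dvd (\<Sum>ks'\<in>Box. D ks' * falling_prod ks' (map a ks))"
    using vanish map_a_in_dom_res[OF less.prems] by blast
  also have "(\<Sum>ks'\<in>Box. D ks' * falling_prod ks' (map a ks)) =
      D ks * falling_prod ks (map a ks) + (\<Sum>ks'\<in>Box - {ks}. D ks' * falling_prod ks' (map a ks))"
    using finite_Box less.prems by (simp add: sum.remove)
  finally have "g dvd D ks * falling_prod ks (map a ks)"
    using dvd_sum[of "Box - {ks}", OF other_terms] by (simp add: dvd_add_left_iff)
  then show ?case by (simp add: modulus_dvd_iff)
qed

lemma degree_mod_g_less: "degree (p mod g) < degree g"
  using degree_mod_less[OF g_nonzero, of p] degree_g_pos by auto

lemma newton_fun_in_funcset: "newton_fun C \<in> dom_res fs \<rightarrow>\<^sub>E res_sys g"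
  by (simp add: newton_fun_def res_sys_def degree_mod_g_less)

lemma is_poly_function_newton_fun: "is_poly_function fs g (newton_fun C)"
proof -
  obtain E c where "finite E" "\<forall>e\<in>E. length e = length fs"
    and eval: "\<And>bs. length bs = length fs \<Longrightarrow> (\<Sum>ks\<in>Box. C ks * falling_prod ks bs) = mpoly_eval E c bs"
    using falling_sum_eq_mpoly_eval[OF finite_Box] length_Box by blast
  moreover have "mpoly_eval E c bs mod g = newton_fun C bs mod g" if "bs \<in> dom_res fs" for bs
    using that eval[of bs] by (simp add: newton_fun_def dom_res_def)
  ultimately show ?thesis unfolding is_poly_function_def by blast
qed

lemma falling_sum_mod_eq_newton_fun:
  assumes "finite K" "Box \<subseteq> K" "\<forall>ks\<in>K. length ks = length fs" "bs \<in> dom_res fs"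
  shows "(\<Sum>ks\<in>K. G ks * falling_prod ks bs) mod g = newton_fun (\<lambda>ks. G ks mod modulus ks) bs"
proof -
  let ?t = "\<lambda>ks. G ks * falling_prod ks bs - (if ks \<in> Box then G ks mod modulus ks * falling_prod ks bs else 0)"
  have "g dvd ?t ks" if "ks \<in> K" for ks
  proof (cases "ks \<in> Box")
    case True
    have "?t ks = G ks div modulus ks * (modulus ks * falling_prod ks bs)"
      using True by (simp add: algebra_simps flip: minus_mod_eq_mult_div)
    then show ?thesis using dvd_modulus_mult_falling_prod by simp
  next
    case False
    then show ?thesis using that assms(3,4) dvd_falling_prod_outside_Box by simp
  qed
  then have "g dvd (\<Sum>ks\<in>K. ?t ks)" by (rule dvd_sum)
  moreover have "(\<Sum>ks\<in>K. ?t ks) =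
      (\<Sum>ks\<in>K. G ks * falling_prod ks bs) - (\<Sum>ks\<in>Box. G ks mod modulus ks * falling_prod ks bs)"
    using assms(1,2) by (simp add: sum_subtractf sum.inter_restrict[symmetric] Int_absorb1)
  ultimately show ?thesis
    using assms(4) by (simp add: newton_fun_def mod_eq_dvd_iff)
qed

lemma poly_function_in_image_newton_fun:
  assumes h: "h \<in> dom_res fs \<rightarrow>\<^sub>E res_sys g" and "is_poly_function fs g h"
  shows "h \<in> newton_fun ` PiE Box residues"
proof -
  obtain E c where "finite E" and len_E: "\<forall>e\<in>E. length e = length fs"
    and h_eval: "\<forall>bs\<in>dom_res fs. mpoly_eval E c bs mod g = h bs mod g"
    using assms(2) unfolding is_poly_function_def by blast
  define N where "N = lambda_fn enum g + (\<Sum>e\<in>E. sum_list e)"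
  have "e ! i \<le> N" if "e \<in> E" "i < length fs" for e i
  proof -
    have "e ! i \<le> sum_list e" using that len_E by (intro elem_le_sum_list) auto
    also have "\<dots> \<le> (\<Sum>e\<in>E. sum_list e)" using \<open>finite E\<close> that by (intro member_le_sum) auto
    finally show ?thesis by (simp add: N_def)
  qed
  then obtain G where G: "\<And>bs. length bs = length fs \<Longrightarrow>
      mpoly_eval E c bs = (\<Sum>ks\<in>list_box (length fs) (\<lambda>_. {..N}). G ks * falling_prod ks bs)"
    using mpoly_eval_eq_falling_sum[OF \<open>finite E\<close>] len_E by blast
  have Box_sub: "Box \<subseteq> list_box (length fs) (\<lambda>_. {..N})"
    using Box_nth_less(2) by (fastforce simp: N_def list_box_def length_Box)
  have "h = newton_fun (\<lambda>ks. G ks mod modulus ks)"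
  proof (rule PiE_ext[OF h newton_fun_in_funcset])
    fix bs assume bs: "bs \<in> dom_res fs"
    have "h bs = h bs mod g" using h bs by (simp add: res_sys_def PiE_iff mod_poly_less)
    also have "\<dots> = (\<Sum>ks\<in>list_box (length fs) (\<lambda>_. {..N}). G ks * falling_prod ks bs) mod g"
      using h_eval bs G by (simp add: dom_res_def)
    also have "\<dots> = newton_fun (\<lambda>ks. G ks mod modulus ks) bs"
      using bs Box_sub by (intro falling_sum_mod_eq_newton_fun finite_list_box) (auto simp: list_box_def)
    finally show "h bs = newton_fun (\<lambda>ks. G ks mod modulus ks) bs" .
  qed
  also have "\<dots> = newton_fun (\<lambda>ks\<in>Box. G ks mod modulus ks)"
    by (simp add: newton_fun_def)
  finally show ?thesis by (auto simp: residues_def)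
qed

lemma inj_on_newton_fun: "inj_on newton_fun (PiE Box residues)"
proof (rule inj_onI)
  fix C C' assume C: "C \<in> PiE Box residues" and C': "C' \<in> PiE Box residues"
    and eq: "newton_fun C = newton_fun C'"
  have "\<forall>bs\<in>dom_res fs. g dvd (\<Sum>ks\<in>Box. (C ks - C' ks) * falling_prod ks bs)"
  proof
    fix bs assume "bs \<in> dom_res fs"
    then have "(\<Sum>ks\<in>Box. C ks * falling_prod ks bs) mod g = (\<Sum>ks\<in>Box. C' ks * falling_prod ks bs) mod g"
      using fun_cong[OF eq, of bs] by (simp add: newton_fun_def)
    then show "g dvd (\<Sum>ks\<in>Box. (C ks - C' ks) * falling_prod ks bs)"
      by (simp add: mod_eq_dvd_iff left_diff_distrib sum_subtractf)
  qed
  then have dvd: "modulus ks dvd C ks - C' ks" if "ks \<in> Box" for ks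
    using that by (rule modulus_dvd_of_vanishing_sum)
  show "C = C'"
  proof (rule PiE_ext[OF C C'])
    fix ks assume ks: "ks \<in> Box"
    then have "C ks mod modulus ks = C' ks mod modulus ks" using dvd by (simp add: mod_eq_dvd_iff)
    moreover have "C ks \<in> residues ks" "C' ks \<in> residues ks" using C C' ks by (auto dest: PiE_mem)
    ultimately show "C ks = C' ks" by (simp add: residues_def)
  qed
qed

lemma poly_functions_eq_image_newton_fun:
  "{h \<in> dom_res fs \<rightarrow>\<^sub>E res_sys g. is_poly_function fs g h} = newton_fun ` PiE Box residues"
  using poly_function_in_image_newton_fun newton_fun_in_funcset is_poly_function_newton_fun by auto

lemma num_poly_functions_eq: "num_poly_functions fs g = (\<Prod>ks\<in>Box. CARD('a) ^ degree (modulus ks))"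
proof -
  have "num_poly_functions fs g = card (PiE Box residues)"
    unfolding num_poly_functions_def poly_functions_eq_image_newton_fun
    using inj_on_newton_fun by (rule card_image)
  also have "\<dots> = (\<Prod>ks\<in>Box. CARD('a) ^ degree (modulus ks))"
    using finite_Box by (simp add: card_PiE card_residues)
  finally show ?thesis .
qed

end

theorem mainTheorem8:
  fixes enum :: "nat \<Rightarrow> 'a::{field_gcd,finite}"
    and fs :: "'a poly list" and g :: "'a poly"
  assumes "bij_betw enum {..<card (UNIV :: 'a set)} (UNIV :: 'a set)"
    and "enum 0 = 0"
    and "fs \<noteq> []"
    and "\<forall>f\<in>set fs. 0 < degree f"
    and "0 < degree g"
  shows "num_poly_functions fs g =
    (\<Prod>ks\<in>{ks. length ks = length fs \<and> (\<forall>i<length fs. ks ! i < mu_fn enum (fs ! i) g)}.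
       card (UNIV :: 'a set) ^ degree (g div gcd g
         (\<Prod>i<length fs. \<Prod>j<ks ! i. a_poly enum (ks ! i) - a_poly enum j)))"
proof -
  interpret poly_function_count enum fs g
    using assms by unfold_locales auto
  have "{ks. length ks = length fs \<and> (\<forall>i<length fs. ks ! i < mu_fn enum (fs ! i) g)} = Box"
    by (simp add: Box_def list_box_def)
  moreover have "modulus ks = g div gcd g (\<Prod>i<length fs. \<Prod>j<ks ! i. a (ks ! i) - a j)"
    if "ks \<in> Box" for ks
    using length_Box[OF that] by (simp add: modulus_def falling_prod_def falling_def)
  ultimately show ?thesis
    unfolding num_poly_functions_eq by (intro prod.cong) simp_all
qed

end
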